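(* Let $E$ be a separable metric space with distance $d$, $m$ a probability measure on $E$ with full support, and for each $N\ge1$ let $E_N\subset E$, let $m_N$ be a probability measure on $E_N$ with $m_N\to m$ weakly, and let $\pi_N:E\to E_N$ be a map with $d(x,\pi_N(x))=\inf_{y\in E_N}d(x,y)$ for all $x\in E$. Let $F_N:E_N\to\mathbb R$, $N\ge1$, satisfy $\sup_N\|F_N\|_\infty<\infty$ and $\omega(\delta):=\sup_{N\ge1}\sup\{|F_N(x)-F_N(y)|:x,y\in E_N,\,d(x,y)\le\delta\}\to0$ as $\delta\downarrow0$. Then there exist a bounded uniformly continuous $F:E\to\mathbb R$ and a subsequence $(N_j)_{j\ge1}$ such that: (1) for every compact $J\subset E$, $\sup_{x\in J\cap E_{N_j}}|F(x)-F_{N_j}(x)|\to0$ as $j\to\infty$; (2) $F_{N_j}(\pi_{N_j}x)\to F(x)$ for all $x\in E$. *)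

theory Defs
  imports "HOL-Analysis.Analysis" "HOL-Probability.Probability"
begin

text \<open>A measure on a subset is integrated against the restriction of f.\<close>
definition weak_conv_on :: "(nat \<Rightarrow> 'a::metric_space measure) \<Rightarrow> 'a measure \<Rightarrow> bool" where
  "weak_conv_on M m \<longleftrightarrow>
     (\<forall>f :: 'a \<Rightarrow> real. continuous_on UNIV f \<and> bounded (range f) \<longrightarrow>
        (\<lambda>N. integral\<^sup>L (M N) f) \<longlonglongrightarrow> integral\<^sup>L m f)"

definition unif_modulus :: "(nat \<Rightarrow> 'a::metric_space set) \<Rightarrow> (nat \<Rightarrow> 'a \<Rightarrow> real) \<Rightarrow> real \<Rightarrow> real" where
  "unif_modulus E F \<delta> =
     (SUP N. SUP p \<in> {(x, y). x \<in> E N \<and> y \<in> E N \<and> dist x y \<le> \<delta>}. \<bar>F N (fst p) - F N (snd p)\<bar>)"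

end

theory Submission
  imports Defs "HOL-Library.Diagonal_Subsequence"
begin

text \<open>Testing the weak convergence against a tent function around a point x, full support of m
  shows that E_N eventually meets every ball around x, so \<pi>_N x \<rightarrow> x. The uniform modulus makes the
  F_N uniformly equicontinuous, hence F_N \<circ> \<pi>_N is equicontinuous up to an error that vanishes
  as N \<rightarrow> \<infinity>. A diagonal argument yields a subsequence along which F_N \<circ> \<pi>_N converges on a
  countable dense set; this asymptotic equicontinuity spreads the convergence to every point,
  the limit G inherits the modulus of continuity, and a finite net of a compact set J turns
  pointwise convergence into uniform convergence on J.\<close>

definition uniformly_equicontinuous_on ::
    "(nat \<Rightarrow> 'a::metric_space set) \<Rightarrow> (nat \<Rightarrow> 'a \<Rightarrow> 'b::metric_space) \<Rightarrow> bool" where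
  "uniformly_equicontinuous_on E F \<longleftrightarrow>
     (\<forall>\<epsilon>>0. \<exists>\<delta>>0. \<forall>N. \<forall>x\<in>E N. \<forall>y\<in>E N. dist x y < \<delta> \<longrightarrow> dist (F N x) (F N y) < \<epsilon>)"

text \<open>The threshold index may depend on the pair of points: this is all that F_N \<circ> \<pi>_N inherits
  from the equicontinuity of F_N, as \<pi>_N converges to the identity only pointwise.\<close>
definition asymptotically_equicontinuous :: "(nat \<Rightarrow> 'a::metric_space \<Rightarrow> 'b::metric_space) \<Rightarrow> bool" where
  "asymptotically_equicontinuous g \<longleftrightarrow>
     (\<forall>\<epsilon>>0. \<exists>\<delta>>0. \<forall>x y. dist x y < \<delta> \<longrightarrow> (\<forall>\<^sub>F j in sequentially. dist (g j x) (g j y) < \<epsilon>))"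

lemma weak_conv_full_support_infdist_tendsto_0:
  fixes m :: "'a::metric_space measure"
  assumes m_fin: "finite_measure m" and m_sets: "sets m = sets borel"
    and m_supp: "\<And>U. open U \<Longrightarrow> U \<noteq> {} \<Longrightarrow> measure m U > 0"
    and M_space: "\<And>N. space (M N) = E N"
    and weak: "weak_conv_on M m"
  shows "(\<lambda>N. infdist x (E N)) \<longlonglongrightarrow> 0"
proof (rule tendstoI)
  fix \<epsilon> :: real assume \<epsilon>: "\<epsilon> > 0"
  interpret finite_measure m by (rule m_fin)
  define f where "f y = max 0 (\<epsilon> - dist x y)" for y
  have f_cont: "continuous_on UNIV f" unfolding f_def by (intro continuous_intros)
  have f_bound: "\<bar>f y\<bar> \<le> \<epsilon>" for y unfolding f_def using \<epsilon> by auto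
  have f_meas: "f \<in> borel_measurable m"
    using borel_measurable_continuous_onI[OF f_cont] measurable_cong_sets[OF m_sets refl] by blast
  have "0 < \<epsilon>/2 * measure m (ball x (\<epsilon>/2))"
    using m_supp \<epsilon> by simp
  also have "\<dots> = (\<integral>y. \<epsilon>/2 * indicator (ball x (\<epsilon>/2)) y \<partial>m)"
    using sets_eq_imp_space_eq[OF m_sets] by simp
  also have "\<dots> \<le> (\<integral>y. f y \<partial>m)"
  proof (rule integral_mono)
    show "integrable m (\<lambda>y. \<epsilon>/2 * indicator (ball x (\<epsilon>/2)) y)"
      using m_sets by (intro integrable_mult_right integrable_real_indicator) (auto simp: emeasure_eq_measure)
    show "integrable m f"
      by (rule integrable_const_bound[where B=\<epsilon>]) (use f_bound f_meas in auto)
    show "\<epsilon>/2 * indicator (ball x (\<epsilon>/2)) y \<le> f y" for y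
      unfolding f_def using \<epsilon> by (auto simp: indicator_def)
  qed
  finally have "(\<integral>y. f y \<partial>m) > 0" .
  moreover have "(\<lambda>N. \<integral>y. f y \<partial>M N) \<longlonglongrightarrow> (\<integral>y. f y \<partial>m)"
    using weak f_cont f_bound unfolding weak_conv_on_def bounded_real by blast
  ultimately have "\<forall>\<^sub>F N in sequentially. (\<integral>y. f y \<partial>M N) > 0"
    by (rule order_tendstoD(1)[rotated])
  then show "\<forall>\<^sub>F N in sequentially. dist (infdist x (E N)) 0 < \<epsilon>"
  proof eventually_elim
    case (elim N)
    have "\<exists>y\<in>E N. f y \<noteq> 0"
    proof (rule ccontr)
      assume "\<not> ?thesis"
      then have "(\<integral>y. f y \<partial>M N) = (\<integral>y. 0 \<partial>M N)"
        using M_space by (intro Bochner_Integration.integral_cong) auto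
      then show False using elim by simp
    qed
    then obtain y where "y \<in> E N" "f y \<noteq> 0" by blast
    then have "y \<in> E N" "dist x y < \<epsilon>" unfolding f_def by auto
    then show ?case using infdist_le[of y "E N" x] infdist_nonneg[of x "E N"] by simp
  qed
qed

lemma nearest_point_tendsto:
  assumes "\<And>N. dist x (\<pi> N x) = infdist x (E N)" and "(\<lambda>N. infdist x (E N)) \<longlonglongrightarrow> 0"
  shows "(\<lambda>N. \<pi> N x) \<longlonglongrightarrow> x"
proof (rule tendsto_dist_iff[THEN iffD2])
  have "dist (\<pi> N x) x = infdist x (E N)" for N
    using assms(1)[of N] by (simp add: dist_commute)
  with assms(2) show "(\<lambda>N. dist (\<pi> N x) x) \<longlonglongrightarrow> 0" by simp
qed

text \<open>The hypothesis \<open>ne\<close> rules out the junk value \<open>Sup {}\<close> of an empty inner supremum, which could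
  spoil the outer supremum.\<close>
lemma unif_modulus_ge:
  fixes F :: "nat \<Rightarrow> 'a::metric_space \<Rightarrow> real"
  assumes ne: "\<And>N. E N \<noteq> {}" and bdd: "\<And>N x. x \<in> E N \<Longrightarrow> \<bar>F N x\<bar> \<le> B"
    and xy: "x \<in> E N" "y \<in> E N" "dist x y \<le> \<delta>"
  shows "\<bar>F N x - F N y\<bar> \<le> unif_modulus E F \<delta>"
proof -
  define S where "S N = {(x, y). x \<in> E N \<and> y \<in> E N \<and> dist x y \<le> \<delta>}" for N
  define osc where "osc N p = \<bar>F N (fst p) - F N (snd p)\<bar>" for N p
  have osc_le: "osc N p \<le> 2 * B" if "p \<in> S N" for N p
    using that bdd[of "fst p" N] bdd[of "snd p" N] unfolding S_def osc_def by auto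
  have S_ne: "S N \<noteq> {}" for N
  proof -
    obtain z where "z \<in> E N" using ne by blast
    moreover have "0 \<le> \<delta>" using xy(3) zero_le_dist[of x y] by linarith
    ultimately have "(z, z) \<in> S N" unfolding S_def by auto
    then show ?thesis by blast
  qed
  have inner_bdd: "bdd_above (osc N ` S N)" for N
    using osc_le by (intro bdd_aboveI2) auto
  have "(SUP p\<in>S N. osc N p) \<le> 2 * B" for N
    using S_ne osc_le by (intro cSUP_least) auto
  then have outer_bdd: "bdd_above (range (\<lambda>N. SUP p\<in>S N. osc N p))"
    by (intro bdd_aboveI2) auto
  have "(x, y) \<in> S N" using xy by (simp add: S_def)
  then have "osc N (x, y) \<le> (SUP p\<in>S N. osc N p)"
    by (rule cSUP_upper[OF _ inner_bdd])
  also have "\<dots> \<le> (SUP N. SUP p\<in>S N. osc N p)"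
    by (rule cSUP_upper[OF UNIV_I outer_bdd])
  finally have "osc N (x, y) \<le> (SUP N. SUP p\<in>S N. osc N p)" .
  then show ?thesis unfolding unif_modulus_def S_def osc_def by simp
qed

lemma unif_modulus_tendsto_0_imp_uniformly_equicontinuous_on:
  fixes F :: "nat \<Rightarrow> 'a::metric_space \<Rightarrow> real"
  assumes ne: "\<And>N. E N \<noteq> {}" and bdd: "\<And>N x. x \<in> E N \<Longrightarrow> \<bar>F N x\<bar> \<le> B"
    and modulus: "(unif_modulus E F \<longlongrightarrow> 0) (at_right 0)"
  shows "uniformly_equicontinuous_on E F"
  unfolding uniformly_equicontinuous_on_def
proof (intro allI impI)
  fix \<epsilon> :: real assume "\<epsilon> > 0"
  have "\<forall>\<^sub>F \<delta> in at_right 0. \<delta> > 0 \<and> dist (unif_modulus E F \<delta>) 0 < \<epsilon>"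
    using eventually_at_right_less tendstoD[OF modulus \<open>\<epsilon> > 0\<close>] by (rule eventually_conj)
  then obtain \<delta> :: real where \<delta>: "\<delta> > 0" "dist (unif_modulus E F \<delta>) 0 < \<epsilon>"
    using eventually_happens'[OF trivial_limit_at_right_real] by blast
  have "dist (F N x) (F N y) < \<epsilon>" if "x \<in> E N" "y \<in> E N" "dist x y < \<delta>" for N x y
    using unif_modulus_ge[where E=E and F=F, OF ne bdd that(1,2) less_imp_le[OF that(3)]] \<delta>(2)
    by (simp add: dist_real_def)
  with \<delta>(1) show "\<exists>\<delta>>0. \<forall>N. \<forall>x\<in>E N. \<forall>y\<in>E N. dist x y < \<delta> \<longrightarrow> dist (F N x) (F N y) < \<epsilon>"
    by blast
qed

lemma uniformly_equicontinuous_on_reindex: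
  assumes "uniformly_equicontinuous_on E F"
  shows "uniformly_equicontinuous_on (\<lambda>j. E (r j)) (\<lambda>j. F (r j))"
  unfolding uniformly_equicontinuous_on_def
proof (intro allI impI)
  fix \<epsilon> :: real assume "\<epsilon> > 0"
  then obtain \<delta> where "\<delta> > 0"
    and \<delta>: "\<forall>N. \<forall>x\<in>E N. \<forall>y\<in>E N. dist x y < \<delta> \<longrightarrow> dist (F N x) (F N y) < \<epsilon>"
    using assms unfolding uniformly_equicontinuous_on_def by blast
  have "dist (F (r j) x) (F (r j) y) < \<epsilon>" if "x \<in> E (r j)" "y \<in> E (r j)" "dist x y < \<delta>" for j x y
    using \<delta> that by blast
  with \<open>\<delta> > 0\<close> show "\<exists>\<delta>>0. \<forall>j. \<forall>x\<in>E (r j). \<forall>y\<in>E (r j). dist x y < \<delta> \<longrightarrow> dist (F (r j) x) (F (r j) y) < \<epsilon>"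
    by blast
qed

lemma asymptotically_equicontinuous_compose:
  assumes equi: "uniformly_equicontinuous_on E F"
    and \<pi>_in: "\<And>N x. \<pi> N x \<in> E N" and \<pi>_lim: "\<And>x. (\<lambda>N. \<pi> N x) \<longlonglongrightarrow> x"
  shows "asymptotically_equicontinuous (\<lambda>N x. F N (\<pi> N x))"
  unfolding asymptotically_equicontinuous_def
proof (intro allI impI)
  fix \<epsilon> :: real assume "\<epsilon> > 0"
  then obtain \<delta> where "\<delta> > 0"
    and \<delta>: "\<forall>N. \<forall>x\<in>E N. \<forall>y\<in>E N. dist x y < \<delta> \<longrightarrow> dist (F N x) (F N y) < \<epsilon>"
    using equi unfolding uniformly_equicontinuous_on_def by blast
  have "\<forall>\<^sub>F N in sequentially. dist (F N (\<pi> N x)) (F N (\<pi> N y)) < \<epsilon>" if "dist x y < \<delta>" for x y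
  proof -
    define \<eta> where "\<eta> = (\<delta> - dist x y) / 2"
    have "\<eta> > 0" using that by (simp add: \<eta>_def)
    then have "\<forall>\<^sub>F N in sequentially. dist (\<pi> N x) x < \<eta> \<and> dist (\<pi> N y) y < \<eta>"
      using \<pi>_lim by (intro eventually_conj tendstoD)
    then show ?thesis
    proof eventually_elim
      case (elim N)
      have "dist (\<pi> N x) (\<pi> N y) \<le> dist (\<pi> N x) x + dist x y + dist (\<pi> N y) y"
        using dist_triangle[of "\<pi> N x" "\<pi> N y" x] dist_triangle[of x "\<pi> N y" y]
        by (simp add: dist_commute)
      then have "dist (\<pi> N x) (\<pi> N y) < \<delta>" using elim by (simp add: \<eta>_def)
      then show ?case using \<delta> \<pi>_in by blast
    qed
  qed
  with \<open>\<delta> > 0\<close> show "\<exists>\<delta>>0. \<forall>x y. dist x y < \<delta> \<longrightarrow>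
      (\<forall>\<^sub>F N in sequentially. dist (F N (\<pi> N x)) (F N (\<pi> N y)) < \<epsilon>)"
    by blast
qed

lemma asymptotically_equicontinuous_subseq:
  assumes "asymptotically_equicontinuous g" and "strict_mono r"
  shows "asymptotically_equicontinuous (\<lambda>j. g (r j))"
  unfolding asymptotically_equicontinuous_def
proof (intro allI impI)
  fix \<epsilon> :: real assume "\<epsilon> > 0"
  then obtain \<delta> where "\<delta> > 0"
    and "\<forall>x y. dist x y < \<delta> \<longrightarrow> (\<forall>\<^sub>F j in sequentially. dist (g j x) (g j y) < \<epsilon>)"
    using assms(1) unfolding asymptotically_equicontinuous_def by blast
  then show "\<exists>\<delta>>0. \<forall>x y. dist x y < \<delta> \<longrightarrow> (\<forall>\<^sub>F j in sequentially. dist (g (r j) x) (g (r j) y) < \<epsilon>)"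
    using eventually_subseq[OF assms(2)] by blast
qed

lemma bounded_sequences_convergent_diagonal_subseq:
  fixes a :: "nat \<Rightarrow> nat \<Rightarrow> 'b::heine_borel"
  assumes bdd: "\<And>k. bounded (range (a k))"
  shows "\<exists>r. strict_mono r \<and> (\<forall>k. convergent (\<lambda>j. a k (r j)))"
proof -
  interpret D: subseqs "\<lambda>k s. convergent (\<lambda>j. a k (s j))"
  proof
    fix k and s :: "nat \<Rightarrow> nat"
    have "bounded (range (\<lambda>j. a k (s j)))"
      using bdd[of k] by (rule bounded_subset) auto
    then obtain l r where "strict_mono r" "((\<lambda>j. a k (s j)) \<circ> r) \<longlonglongrightarrow> l"
      using bounded_imp_convergent_subsequence by blast
    then show "\<exists>r. strict_mono r \<and> convergent (\<lambda>j. a k ((s \<circ> r) j))"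
      by (auto simp: convergent_def o_def)
  qed
  have "convergent (\<lambda>j. a k (D.diagseq j))" for k
  proof -
    have "convergent (\<lambda>j. a k ((D.diagseq \<circ> (+) (Suc k)) j))"
    proof (rule D.diagseq_holds)
      fix r s n assume "strict_mono (r :: nat \<Rightarrow> nat)" "convergent (\<lambda>j. a n (s j))"
      then show "convergent (\<lambda>j. a n ((s \<circ> r) j))"
        using convergent_subseq_convergent[of "\<lambda>j. a n (s j)" r] by (simp add: o_def)
    qed
    then show ?thesis
      using convergent_ignore_initial_segment[of "\<lambda>j. a k (D.diagseq j)" "Suc k"]
      by (simp add: o_def add.commute)
  qed
  then show ?thesis using D.subseq_diagseq by blast
qed

lemma asymptotically_equicontinuous_convergent_on_closure:
  fixes g :: "nat \<Rightarrow> 'a::metric_space \<Rightarrow> 'b::complete_space"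
  assumes asym: "asymptotically_equicontinuous g"
    and conv: "\<And>c. c \<in> C \<Longrightarrow> convergent (\<lambda>j. g j c)" and x: "x \<in> closure C"
  shows "convergent (\<lambda>j. g j x)"
proof -
  have "Cauchy (\<lambda>j. g j x)"
  proof (rule metric_CauchyI)
    fix \<epsilon> :: real assume "\<epsilon> > 0"
    then have "\<epsilon>/3 > 0" by simp
    then obtain \<delta> where "\<delta> > 0"
      and \<delta>: "\<And>x y. dist x y < \<delta> \<Longrightarrow> \<forall>\<^sub>F j in sequentially. dist (g j x) (g j y) < \<epsilon>/3"
      using asym unfolding asymptotically_equicontinuous_def by blast
    obtain c where "c \<in> C" "dist c x < \<delta>"
      using x \<open>\<delta> > 0\<close> unfolding closure_approachable by blast
    then have "dist x c < \<delta>" by (simp add: dist_commute)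
    then obtain M1 where M1: "\<And>j. j \<ge> M1 \<Longrightarrow> dist (g j x) (g j c) < \<epsilon>/3"
      using \<delta> unfolding eventually_sequentially by blast
    obtain M2 where M2: "\<And>m n. m \<ge> M2 \<Longrightarrow> n \<ge> M2 \<Longrightarrow> dist (g m c) (g n c) < \<epsilon>/3"
      using conv[OF \<open>c \<in> C\<close>] \<open>\<epsilon>/3 > 0\<close> unfolding Cauchy_convergent_iff[symmetric] Cauchy_def
      by blast
    have "dist (g m x) (g n x) < \<epsilon>" if "m \<ge> max M1 M2" "n \<ge> max M1 M2" for m n
    proof (rule dist_triangle_third)
      show "dist (g m x) (g m c) < \<epsilon>/3" "dist (g m c) (g n c) < \<epsilon>/3"
        using M1[of m] M2[of m n] that by auto
      show "dist (g n c) (g n x) < \<epsilon>/3"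
        using M1[of n] that by (simp add: dist_commute)
    qed
    then show "\<exists>M. \<forall>m\<ge>M. \<forall>n\<ge>M. dist (g m x) (g n x) < \<epsilon>" by blast
  qed
  then show ?thesis by (simp add: Cauchy_convergent_iff)
qed

lemma asymptotically_equicontinuous_limit_uniformly_continuous:
  assumes asym: "asymptotically_equicontinuous g" and lim: "\<And>x. (\<lambda>j. g j x) \<longlonglongrightarrow> G x"
  shows "uniformly_continuous_on UNIV G"
  unfolding uniformly_continuous_on_def
proof (intro allI impI)
  fix \<epsilon> :: real assume "\<epsilon> > 0"
  then have "\<epsilon>/2 > 0" by simp
  then obtain \<delta> where "\<delta> > 0"
    and \<delta>: "\<And>x y. dist x y < \<delta> \<Longrightarrow> \<forall>\<^sub>F j in sequentially. dist (g j x) (g j y) < \<epsilon>/2"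
    using asym unfolding asymptotically_equicontinuous_def by blast
  have "dist (G x) (G y) \<le> \<epsilon>/2" if "dist x y < \<delta>" for x y
    using \<delta>[OF that]
    by (intro tendsto_le[OF sequentially_bot tendsto_const tendsto_dist[OF lim lim]])
      (auto elim: eventually_mono)
  moreover have "\<epsilon>/2 < \<epsilon>" using \<open>\<epsilon> > 0\<close> by simp
  ultimately show "\<exists>\<delta>>0. \<forall>x\<in>UNIV. \<forall>y\<in>UNIV. dist y x < \<delta> \<longrightarrow> dist (G y) (G x) < \<epsilon>"
    using \<open>\<delta> > 0\<close> by (meson le_less_trans)
qed

lemma asymptotically_equicontinuous_convergent_subseq:
  fixes g :: "nat \<Rightarrow> 'a::metric_space \<Rightarrow> 'b::heine_borel"
  assumes sep: "separable_space (euclidean :: 'a topology)"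
    and asym: "asymptotically_equicontinuous g" and bdd: "\<And>x. bounded (range (\<lambda>j. g j x))"
  shows "\<exists>r G. strict_mono r \<and> (\<forall>x. (\<lambda>j. g (r j) x) \<longlonglongrightarrow> G x)"
proof -
  obtain C :: "'a set" where "countable C" and C_dense: "closure C = UNIV"
    using sep unfolding separable_space_def euclidean_closure_of topspace_euclidean by blast
  obtain r where r: "strict_mono r" and conv_C: "\<forall>k. convergent (\<lambda>j. g (r j) (from_nat_into C k))"
    using bounded_sequences_convergent_diagonal_subseq[of "\<lambda>k j. g j (from_nat_into C k)", OF bdd]
    by blast
  have "convergent (\<lambda>j. g (r j) x)" for x
  proof (rule asymptotically_equicontinuous_convergent_on_closure[where g="\<lambda>j. g (r j)"])
    show "asymptotically_equicontinuous (\<lambda>j. g (r j))"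
      using asym r by (rule asymptotically_equicontinuous_subseq)
    show "convergent (\<lambda>j. g (r j) c)" if c: "c \<in> C" for c
    proof -
      obtain k where "from_nat_into C k = c" using from_nat_into_surj[OF \<open>countable C\<close> c] ..
      then show ?thesis using conv_C by blast
    qed
    show "x \<in> closure C" using C_dense by simp
  qed
  then have "\<forall>x. (\<lambda>j. g (r j) x) \<longlonglongrightarrow> lim (\<lambda>j. g (r j) x)"
    by (simp add: convergent_LIMSEQ_iff)
  with r show ?thesis by (intro exI[of _ r] exI[of _ "\<lambda>x. lim (\<lambda>j. g (r j) x)"]) simp
qed

lemma uniformly_equicontinuous_on_tendsto_uniformly_on_compact:
  assumes equi: "uniformly_equicontinuous_on E F"
    and \<pi>_in: "\<And>N x. \<pi> N x \<in> E N" and \<pi>_lim: "\<And>x. (\<lambda>N. \<pi> N x) \<longlonglongrightarrow> x"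
    and lim: "\<And>x. (\<lambda>N. F N (\<pi> N x)) \<longlonglongrightarrow> G x"
    and J: "compact J" and G_cont: "continuous_on J G" and "\<epsilon> > 0"
  shows "\<forall>\<^sub>F N in sequentially. \<forall>x\<in>J \<inter> E N. dist (G x) (F N x) < \<epsilon>"
proof -
  have "\<epsilon>/3 > 0" using \<open>\<epsilon> > 0\<close> by simp
  then obtain \<delta>1 where "\<delta>1 > 0"
    and \<delta>1: "\<forall>N. \<forall>x\<in>E N. \<forall>y\<in>E N. dist x y < \<delta>1 \<longrightarrow> dist (F N x) (F N y) < \<epsilon>/3"
    using equi unfolding uniformly_equicontinuous_on_def by blast
  obtain \<delta>2 where "\<delta>2 > 0" and \<delta>2: "\<forall>x\<in>J. \<forall>y\<in>J. dist y x < \<delta>2 \<longrightarrow> dist (G y) (G x) < \<epsilon>/3"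
    using compact_uniformly_continuous[OF G_cont J] \<open>\<epsilon>/3 > 0\<close>
    unfolding uniformly_continuous_on_def by blast
  define \<delta> where "\<delta> = min \<delta>1 \<delta>2"
  have "\<delta> > 0" using \<open>\<delta>1 > 0\<close> \<open>\<delta>2 > 0\<close> by (simp add: \<delta>_def)
  obtain K where "K \<subseteq> J" "finite K" and K_net: "J \<subseteq> (\<Union>c\<in>K. ball c (\<delta>/2))"
    using compactE_image[OF J, of J "\<lambda>c. ball c (\<delta>/2)"] \<open>\<delta> > 0\<close> by force
  have "\<forall>\<^sub>F N in sequentially. dist (G c) (F N (\<pi> N c)) < \<epsilon>/3 \<and> dist (\<pi> N c) c < \<delta>/2" for c
  proof -
    have "\<delta>/2 > 0" using \<open>\<delta> > 0\<close> by simp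
    with \<open>\<epsilon>/3 > 0\<close> have "\<forall>\<^sub>F N in sequentially. dist (F N (\<pi> N c)) (G c) < \<epsilon>/3 \<and> dist (\<pi> N c) c < \<delta>/2"
      by (intro eventually_conj tendstoD[OF lim] tendstoD[OF \<pi>_lim])
    then show ?thesis by (simp add: dist_commute)
  qed
  then have "\<forall>\<^sub>F N in sequentially. \<forall>c\<in>K. dist (G c) (F N (\<pi> N c)) < \<epsilon>/3 \<and> dist (\<pi> N c) c < \<delta>/2"
    using \<open>finite K\<close> by (intro eventually_ball_finite) auto
  then show ?thesis
  proof eventually_elim
    case (elim N)
    show ?case
    proof
      fix x assume x: "x \<in> J \<inter> E N"
      then obtain c where "c \<in> K" "dist c x < \<delta>/2" using K_net by auto
      with elim have c: "dist (G c) (F N (\<pi> N c)) < \<epsilon>/3" "dist (\<pi> N c) c < \<delta>/2" by auto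
      have "dist (\<pi> N c) x < \<delta>1"
        using c(2) \<open>dist c x < \<delta>/2\<close> dist_triangle[of "\<pi> N c" x c] unfolding \<delta>_def by linarith
      then have F_close: "dist (F N (\<pi> N c)) (F N x) < \<epsilon>/3" using \<delta>1 x \<pi>_in by blast
      have "dist x c < \<delta>2"
        using \<open>dist c x < \<delta>/2\<close> \<open>\<delta> > 0\<close> unfolding \<delta>_def by (simp add: dist_commute)
      then have G_close: "dist (G x) (G c) < \<epsilon>/3"
        using \<delta>2 \<open>c \<in> K\<close> \<open>K \<subseteq> J\<close> x by blast
      show "dist (G x) (F N x) < \<epsilon>"
        by (rule dist_triangle_third[OF G_close c(1) F_close])
    qed
  qed
qed

theorem theorem2p7:
  fixes m :: "'a::metric_space measure"
    and E :: "nat \<Rightarrow> 'a set"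
    and M :: "nat \<Rightarrow> 'a measure"
    and \<pi> :: "nat \<Rightarrow> 'a \<Rightarrow> 'a"
    and F :: "nat \<Rightarrow> 'a \<Rightarrow> real"
  assumes sep: "separable_space (euclidean :: 'a topology)"
    and m_prob: "prob_space m" and m_sets: "sets m = sets borel"
    and m_supp: "\<And>U. open U \<Longrightarrow> U \<noteq> {} \<Longrightarrow> measure m U > 0"
    and M_prob: "\<And>N. prob_space (M N)"
    and M_sets: "\<And>N. sets (M N) = sets (restrict_space borel (E N))"
    and M_space: "\<And>N. space (M N) = E N"
    and weak: "weak_conv_on M m"
    and \<pi>_in: "\<And>N x. \<pi> N x \<in> E N"
    and \<pi>_dist: "\<And>N x. dist x (\<pi> N x) = infdist x (E N)"
    and F_bdd: "\<exists>B. \<forall>N. \<forall>x\<in>E N. \<bar>F N x\<bar> \<le> B"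
    and F_mod: "(unif_modulus E F \<longlongrightarrow> 0) (at_right 0)"
  shows "\<exists>G :: 'a \<Rightarrow> real. \<exists>r :: nat \<Rightarrow> nat.
           bounded (range G) \<and> uniformly_continuous_on UNIV G \<and> strict_mono r \<and>
           (\<forall>J. compact J \<longrightarrow>
              (\<forall>\<epsilon>>0. \<forall>\<^sub>F j in sequentially. \<forall>x\<in>J \<inter> E (r j). \<bar>G x - F (r j) x\<bar> \<le> \<epsilon>)) \<and>
           (\<forall>x. (\<lambda>j. F (r j) (\<pi> (r j) x)) \<longlonglongrightarrow> G x)"
proof -
  obtain B where B: "\<And>N x. x \<in> E N \<Longrightarrow> \<bar>F N x\<bar> \<le> B" using F_bdd by blast
  have equi: "uniformly_equicontinuous_on E F"
    using \<pi>_in B F_mod by (intro unif_modulus_tendsto_0_imp_uniformly_equicontinuous_on) blast+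
  have \<pi>_lim: "(\<lambda>N. \<pi> N x) \<longlonglongrightarrow> x" for x
    using \<pi>_dist weak_conv_full_support_infdist_tendsto_0[OF prob_space.axioms(1)[OF m_prob]
        m_sets m_supp M_space weak]
    by (rule nearest_point_tendsto)
  have asym: "asymptotically_equicontinuous (\<lambda>N x. F N (\<pi> N x))"
    using equi \<pi>_in \<pi>_lim by (rule asymptotically_equicontinuous_compose)
  have "bounded (range (\<lambda>N. F N (\<pi> N x)))" for x
    unfolding bounded_real using B \<pi>_in by blast
  then obtain r G where r: "strict_mono r" and lim: "\<And>x. (\<lambda>j. F (r j) (\<pi> (r j) x)) \<longlonglongrightarrow> G x"
    using asymptotically_equicontinuous_convergent_subseq[OF sep asym] by blast
  have G_uc: "uniformly_continuous_on UNIV G"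
    using asymptotically_equicontinuous_subseq[OF asym r] lim
    by (rule asymptotically_equicontinuous_limit_uniformly_continuous)
  have G_cont: "continuous_on J G" for J
    using uniformly_continuous_imp_continuous[OF G_uc] subset_UNIV by (rule continuous_on_subset)
  have \<pi>_lim_r: "(\<lambda>j. \<pi> (r j) x) \<longlonglongrightarrow> x" for x
    using LIMSEQ_subseq_LIMSEQ[OF \<pi>_lim r] by (simp add: o_def)
  have "norm (G x) \<le> B" for x
    using B \<pi>_in by (intro Lim_norm_ubound[OF sequentially_bot lim]) auto
  then have G_bdd: "bounded (range G)" unfolding bounded_iff by blast
  have uniform: "\<forall>\<^sub>F j in sequentially. \<forall>x\<in>J \<inter> E (r j). dist (G x) (F (r j) x) < \<epsilon>"
    if "compact J" "\<epsilon> > 0" for J \<epsilon>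
    using uniformly_equicontinuous_on_reindex[OF equi] \<pi>_in \<pi>_lim_r lim that(1) G_cont that(2)
    by (rule uniformly_equicontinuous_on_tendsto_uniformly_on_compact)
  have "\<forall>\<^sub>F j in sequentially. \<forall>x\<in>J \<inter> E (r j). \<bar>G x - F (r j) x\<bar> \<le> \<epsilon>"
    if "compact J" "\<epsilon> > 0" for J \<epsilon>
    using uniform[OF that] by (rule eventually_mono) (unfold dist_real_def, blast intro: less_imp_le)
  with G_bdd G_uc r lim show ?thesis by blast
qed

end
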